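(* Let $t\ge 1$ be an integer and $n=2(t+1)^2$. For each $0\le i\le t$, let $\mathcal{C}_i\subseteq\mathbb{Z}_n^2$ be the linear code generated by the rows of \[ G_i=\begin{bmatrix} t+1+i & t+1-i\\ i & 2(t+1)-i\end{bmatrix}. \] Then every translate $\mathbf{x}+\mathcal{C}_i$ ($\mathbf{x}\in\mathbb{Z}_n^2$) is a $(2t+1)$-diameter perfect code with minimum distance $2t+2$ and anticode $\mathcal{A}_{2t+1}$.
   Context: $\mathbb{Z}_n$ is the ring of integers modulo $n$. A code of length $m$ is a subset of $\mathbb{Z}_n^m$; it is linear if it is a submodule, and the code generated by a matrix is the submodule spanned by its rows. The Lee weight of $\mathbf{u}=(u_1,\dots,u_m)\in\mathbb{Z}_n^m$ is $\mathrm{wt}_L(\mathbf{u})=\sum_i\min\{u_i,n-u_i\}$ (with $u_i$ represented in $\{0,\dots,n-1\}$), and the Lee distance is $d_L(\mathbf{u},\mathbf{v})=\mathrm{wt}_L(\mathbf{u}-\mathbf{v})$; all distances are Lee distances. The minimum distance of a code is the minimum Lee distance between distinct codewords. A translate of $\mathcal{C}$ by $\mathbf{x}$ is $\mathbf{x}+\mathcal{C}=\{\mathbf{x}+\mathbf{c}:\mathbf{c}\in\mathcal{C}\}$. An anticode of diameter $D$ is a subset in which the maximum distance between two elements is $D$. For an adjacent pair $\{p_1,p_2\}$ of points (Lee distance $1$) and $2t+1\le n$, $\mathcal{A}_{2t+1}$ denotes the set of all points at distance at most $t$ from $\{p_1,p_2\}$ (i.e. from $p_1$ or from $p_2$); $\{p_1,p_2\}$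 is its core. Code–anticode bound: if $\mathcal{C}$ has minimum distance $d$ and $\mathcal{A}$ is an anticode of diameter $D=d-1$, then $|\mathcal{C}|\cdot|\mathcal{A}|\le|\mathbb{Z}_n^m|$; a code attaining equality (with $\mathcal{A}$ an anticode of maximum size for diameter $D$) is called a $D$-diameter perfect code (with anticode $\mathcal{A}$). *)

theory Defs
  imports Main
begin

text \<open>Vectors of Z_n^m are represented as integer lists of length m with entries
  in {0..<n}; arithmetic is componentwise modulo n.\<close>

definition Zn_space :: "nat \<Rightarrow> nat \<Rightarrow> int list set" where
  "Zn_space n m = {v. length v = m \<and> set v \<subseteq> {0..<int n}}"

definition lee_wt :: "nat \<Rightarrow> int list \<Rightarrow> nat" where
  "lee_wt n v = sum_list (map (\<lambda>a. nat (min (a mod int n) (int n - a mod int n))) v)"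

definition lee_dist :: "nat \<Rightarrow> int list \<Rightarrow> int list \<Rightarrow> nat" where
  "lee_dist n u v = lee_wt n (map2 (-) u v)"

definition vadd :: "nat \<Rightarrow> int list \<Rightarrow> int list \<Rightarrow> int list" where
  "vadd n u v = map2 (\<lambda>a b. (a + b) mod int n) u v"

definition gen_code :: "nat \<Rightarrow> nat \<Rightarrow> int list list \<Rightarrow> int list set" where
  "gen_code n m rows =
     {map (\<lambda>k. (\<Sum>j<length rows. c j * (rows ! j ! k)) mod int n) [0..<m] | c :: nat \<Rightarrow> int. True}"

definition translate :: "nat \<Rightarrow> int list \<Rightarrow> int list set \<Rightarrow> int list set" where
  "translate n x C = (\<lambda>c. vadd n x c) ` C"

definition min_dist :: "nat \<Rightarrow> int list set \<Rightarrow> nat" where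
  "min_dist n C = Min {lee_dist n u v | u v. u \<in> C \<and> v \<in> C \<and> u \<noteq> v}"

definition diam :: "nat \<Rightarrow> int list set \<Rightarrow> nat" where
  "diam n A = Max {lee_dist n u v | u v. u \<in> A \<and> v \<in> A}"

definition is_anticode :: "nat \<Rightarrow> nat \<Rightarrow> nat \<Rightarrow> int list set \<Rightarrow> bool" where
  "is_anticode n m D A \<longleftrightarrow> A \<subseteq> Zn_space n m \<and> A \<noteq> {} \<and> diam n A = D"

definition anticode_A :: "nat \<Rightarrow> nat \<Rightarrow> nat \<Rightarrow> int list \<Rightarrow> int list \<Rightarrow> int list set" where
  "anticode_A n m t p1 p2 =
     {x \<in> Zn_space n m. lee_dist n x p1 \<le> t \<or> lee_dist n x p2 \<le> t}"

definition diameter_perfect ::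
  "nat \<Rightarrow> nat \<Rightarrow> nat \<Rightarrow> int list set \<Rightarrow> int list set \<Rightarrow> bool" where
  "diameter_perfect n m D C A \<longleftrightarrow>
     C \<subseteq> Zn_space n m \<and> min_dist n C = D + 1 \<and>
     is_anticode n m D A \<and>
     (\<forall>B. is_anticode n m D B \<longrightarrow> card B \<le> card A) \<and>
     card C * card A = card (Zn_space n m)"

end

theory Submission
  imports Defs
begin

(* Write s = t + 1, so that n = 2 s^2. Subtracting the second row of G_i from the first shows
   that C_i is generated by (s, -s) and (i, 2s - i). A codeword e = u (s, -s) + v (i, 2s - i)
   satisfies e_0 + e_1 = 2 s v (mod 2 s^2); hence either the representative of e of least Lee
   weight has |e_0 + e_1| >= 2s, or e_1 = -e_0, s divides v and therefore e_0, and again the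
   weight is at least 2s. The generator (i, 2s - i) has weight exactly 2s, and the coefficient
   box [0, 2s) x [0, s) yields 2 s^2 = n distinct codewords.
   Writing p2 = p1 + e for a unit vector e, the points p1 + a e + b e', with e' the rotation of e
   by a right angle and (a, b) in the union of the two Lee balls of radius t around (0, 0) and
   (1, 0) in Z^2, are 2 (t + 1)^2 = n distinct points of A_{2t+1}. The code-anticode bound
   |C| |A| <= n^2 then forces |C| = |A| = n, which is diameter perfection. *)

section \<open>Lee weight and Lee distance\<close>

definition lee_norm :: "nat \<Rightarrow> int \<Rightarrow> nat" where
  "lee_norm n a = nat (min (a mod int n) (int n - a mod int n))"

lemma lee_wt_eq_sum_list: "lee_wt n v = sum_list (map (lee_norm n) v)"
  unfolding lee_wt_def lee_norm_def [abs_def] ..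

lemma lee_norm_mod_cong: "a mod int n = b mod int n \<Longrightarrow> lee_norm n a = lee_norm n b"
  by (simp add: lee_norm_def)

lemma lee_norm_uminus: "lee_norm n (- a) = lee_norm n a"
  by (auto simp: lee_norm_def zmod_zminus1_eq_if)

lemma lee_norm_le_abs: "int (lee_norm n a) \<le> \<bar>a\<bar>"
proof -
  have "int (lee_norm n b) \<le> b" if "b \<ge> 0" for b
  proof -
    have "min (b mod int n) (int n - b mod int n) \<le> b"
      using zmod_le_nonneg_dividend[OF that, of "int n"] by linarith
    then show ?thesis using that by (simp add: lee_norm_def)
  qed
  from this[of a] this[of "- a"] show ?thesis
    by (cases "a \<ge> 0") (simp_all add: lee_norm_uminus)
qed

lemma lee_norm_attained:
  assumes "n > 0"
  obtains a' where "a' mod int n = a mod int n" "\<bar>a'\<bar> = int (lee_norm n a)"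
proof -
  have r: "0 \<le> a mod int n" "a mod int n < int n" using assms by simp_all
  show ?thesis
  proof (cases "a mod int n \<le> int n - a mod int n")
    case True
    with r show ?thesis by (intro that[of "a mod int n"]) (simp_all add: lee_norm_def)
  next
    case False
    with r show ?thesis by (intro that[of "a mod int n - int n"]) (simp_all add: lee_norm_def)
  qed
qed

lemma lee_norm_eq_abs:
  assumes "2 * \<bar>a\<bar> \<le> int n"
  shows "int (lee_norm n a) = \<bar>a\<bar>"
proof -
  have "int (lee_norm n b) = b" if "b \<ge> 0" "2 * b \<le> int n" for b
    using that by (cases "b = int n") (auto simp: lee_norm_def)
  from this[of a] this[of "- a"] show ?thesis
    using assms by (cases "a \<ge> 0") (simp_all add: lee_norm_uminus)
qed

lemma lee_norm_add_eq_abs: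
  assumes "2 * (\<bar>a\<bar> + \<bar>b\<bar>) \<le> int n"
  shows "int (lee_norm n a + lee_norm n b) = \<bar>a\<bar> + \<bar>b\<bar>"
proof -
  have "2 * \<bar>a\<bar> \<le> 2 * (\<bar>a\<bar> + \<bar>b\<bar>)" "2 * \<bar>b\<bar> \<le> 2 * (\<bar>a\<bar> + \<bar>b\<bar>)"
    by simp_all
  then have "2 * \<bar>a\<bar> \<le> int n" "2 * \<bar>b\<bar> \<le> int n"
    using assms by (blast intro: order_trans)+
  then show ?thesis by (simp add: lee_norm_eq_abs)
qed

lemma lee_norm_triangle: "lee_norm n (a + b) \<le> lee_norm n a + lee_norm n b"
proof (cases "n = 0")
  case True
  then show ?thesis by (simp add: lee_norm_def)
next
  case False
  obtain a' where a': "a' mod int n = a mod int n" "\<bar>a'\<bar> = int (lee_norm n a)"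
    using lee_norm_attained False by blast
  obtain b' where b': "b' mod int n = b mod int n" "\<bar>b'\<bar> = int (lee_norm n b)"
    using lee_norm_attained False by blast
  have "lee_norm n (a + b) = lee_norm n (a' + b')"
    using a'(1) b'(1) by (intro lee_norm_mod_cong) (metis mod_add_cong)
  also have "int \<dots> \<le> \<bar>a' + b'\<bar>" by (rule lee_norm_le_abs)
  also have "\<dots> \<le> \<bar>a'\<bar> + \<bar>b'\<bar>" by (rule abs_triangle_ineq)
  finally show ?thesis using a'(2) b'(2) by simp
qed

lemma lee_dist_eq_sum:
  "length u = length v \<Longrightarrow> lee_dist n u v = (\<Sum>k<length u. lee_norm n (u ! k - v ! k))"
  unfolding lee_dist_def lee_wt_eq_sum_list sum_list_sum_nth atLeast0LessThan
  by (intro sum.cong) auto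

lemma lee_dist_self: "lee_dist n u u = 0"
  by (simp add: lee_dist_eq_sum[of u u] lee_norm_def)

lemma lee_dist_commute:
  assumes "length u = length v"
  shows "lee_dist n u v = lee_dist n v u"
proof -
  have "lee_dist n u v = (\<Sum>k<length v. lee_norm n (- (v ! k - u ! k)))"
    using assms by (simp add: lee_dist_eq_sum)
  then show ?thesis
    using assms by (simp only: lee_norm_uminus lee_dist_eq_sum)
qed

lemma lee_dist_triangle:
  assumes "length u = length v" "length v = length w"
  shows "lee_dist n u w \<le> lee_dist n u v + lee_dist n v w"
proof -
  have "lee_norm n (u ! k - w ! k) \<le> lee_norm n (u ! k - v ! k) + lee_norm n (v ! k - w ! k)"
    for k
    using lee_norm_triangle[of n "u ! k - v ! k" "v ! k - w ! k"] by simp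
  then have "(\<Sum>k<length u. lee_norm n (u ! k - w ! k))
      \<le> (\<Sum>k<length u. lee_norm n (u ! k - v ! k)) + (\<Sum>k<length u. lee_norm n (v ! k - w ! k))"
    unfolding sum.distrib[symmetric] by (rule sum_mono)
  then show ?thesis
    using assms by (simp add: lee_dist_eq_sum)
qed

lemma lee_dist_mod_cong:
  assumes "length u = length v" "length u' = length v'" "length u = length u'"
    and "\<And>k. k < length u \<Longrightarrow> (u ! k - v ! k) mod int n = (u' ! k - v' ! k) mod int n"
  shows "lee_dist n u v = lee_dist n u' v'"
proof -
  have "(\<Sum>k<length u. lee_norm n (u ! k - v ! k))
      = (\<Sum>k<length u. lee_norm n (u' ! k - v' ! k))"
    using assms(4) by (intro sum.cong) (auto intro: lee_norm_mod_cong)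
  then show ?thesis
    using lee_dist_eq_sum[OF assms(1)] lee_dist_eq_sum[OF assms(2)] assms(3) by simp
qed

section \<open>The code--anticode bound\<close>

lemma Zn_space_length: "u \<in> Zn_space n m \<Longrightarrow> length u = m"
  by (simp add: Zn_space_def)

lemma Zn_space_nth: "u \<in> Zn_space n m \<Longrightarrow> k < m \<Longrightarrow> 0 \<le> u ! k \<and> u ! k < int n"
  unfolding Zn_space_def using nth_mem by fastforce

lemma finite_Zn_space: "finite (Zn_space n m)"
  unfolding Zn_space_def using finite_lists_length_eq[of "{0..<int n}" m]
  by (simp add: conj_commute)

lemma card_Zn_space: "card (Zn_space n m) = n ^ m"
  unfolding Zn_space_def using card_lists_length_eq[of "{0..<int n}" m]
  by (simp add: conj_commute)

lemma vadd_in_Zn_space: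
  "n > 0 \<Longrightarrow> u \<in> Zn_space n m \<Longrightarrow> v \<in> Zn_space n m \<Longrightarrow> vadd n u v \<in> Zn_space n m"
  by (auto simp: Zn_space_def vadd_def set_zip)

lemma nth_vadd:
  "k < length u \<Longrightarrow> k < length v \<Longrightarrow> vadd n u v ! k = (u ! k + v ! k) mod int n"
  by (simp add: vadd_def)

(* c + b = c' + b' forces d(b, b') = d(c', c), so (c, b) \<mapsto> c + b is injective on C \<times> B. *)
lemma code_anticode_bound:
  assumes "n > 0" and C: "C \<subseteq> Zn_space n m" and B: "B \<subseteq> Zn_space n m"
    and sep: "\<And>u v. u \<in> C \<Longrightarrow> v \<in> C \<Longrightarrow> u \<noteq> v \<Longrightarrow> D < lee_dist n u v"
    and diam: "\<And>u v. u \<in> B \<Longrightarrow> v \<in> B \<Longrightarrow> lee_dist n u v \<le> D"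
  shows "card C * card B \<le> n ^ m"
proof -
  have "inj_on (\<lambda>(c, b). vadd n c b) (C \<times> B)"
  proof (rule inj_onI, clarify)
    fix c b c' b'
    assume mem: "c \<in> C" "b \<in> B" "c' \<in> C" "b' \<in> B" and eq: "vadd n c b = vadd n c' b'"
    have len: "length c = m" "length b = m" "length c' = m" "length b' = m"
      using mem C B by (auto simp: Zn_space_length)
    have comp: "(c ! k + b ! k) mod int n = (c' ! k + b' ! k) mod int n" if "k < m" for k
      using arg_cong[OF eq, of "\<lambda>w. w ! k"] that len by (simp add: nth_vadd)
    have "(b ! k - b' ! k) mod int n = (c' ! k - c ! k) mod int n" if "k < m" for k
      using comp[OF that] by (simp add: mod_eq_dvd_iff algebra_simps)
    then have "lee_dist n b b' = lee_dist n c' c"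
      using len by (intro lee_dist_mod_cong) auto
    then have "c = c'"
      using sep[of c' c] diam[of b b'] mem by force
    have "b ! k = b' ! k" if "k < m" for k
    proof -
      have "b ! k mod int n = b' ! k mod int n"
        using comp[OF that] \<open>c = c'\<close> by (simp add: mod_eq_dvd_iff)
      moreover have "b ! k mod int n = b ! k" "b' ! k mod int n = b' ! k"
        using Zn_space_nth[of b n m k] Zn_space_nth[of b' n m k] mem B that by auto
      ultimately show ?thesis by simp
    qed
    then show "c = c' \<and> b = b'"
      using \<open>c = c'\<close> len by (simp add: nth_equalityI)
  qed
  moreover have "(\<lambda>(c, b). vadd n c b) ` (C \<times> B) \<subseteq> Zn_space n m"
    using C B \<open>n > 0\<close> by (auto intro: vadd_in_Zn_space)
  ultimately have "card (C \<times> B) \<le> card (Zn_space n m)"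
    by (rule card_inj_on_le[OF _ _ finite_Zn_space])
  then show ?thesis by (simp add: card_cartesian_product card_Zn_space)
qed

lemma finite_lee_dists:
  "finite C \<Longrightarrow> finite {lee_dist n u v | u v. u \<in> C \<and> v \<in> C \<and> P u v}"
  by (rule finite_subset[of _ "(\<lambda>(u, v). lee_dist n u v) ` (C \<times> C)"]) auto

lemma min_dist_le:
  assumes "finite C" "u \<in> C" "v \<in> C" "u \<noteq> v"
  shows "min_dist n C \<le> lee_dist n u v"
  unfolding min_dist_def using assms finite_lee_dists[OF assms(1), of n "(\<noteq>)"]
  by (intro Min_le) auto

lemma min_dist_eqI:
  assumes "finite C" "\<And>u v. u \<in> C \<Longrightarrow> v \<in> C \<Longrightarrow> u \<noteq> v \<Longrightarrow> d \<le> lee_dist n u v"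
    and "u \<in> C" "v \<in> C" "u \<noteq> v" "lee_dist n u v = d"
  shows "min_dist n C = d"
  unfolding min_dist_def using assms finite_lee_dists[OF assms(1), of n "(\<noteq>)"]
  by (intro Min_eqI) auto

lemma lee_dist_le_diam:
  assumes "finite A" "u \<in> A" "v \<in> A"
  shows "lee_dist n u v \<le> diam n A"
  unfolding diam_def using assms finite_lee_dists[OF assms(1), of n "\<lambda>_ _. True"]
  by (intro Max_ge) auto

lemma diam_eqI:
  assumes "finite A" "\<And>u v. u \<in> A \<Longrightarrow> v \<in> A \<Longrightarrow> lee_dist n u v \<le> D"
    and "u \<in> A" "v \<in> A" "lee_dist n u v = D"
  shows "diam n A = D"
  unfolding diam_def using assms finite_lee_dists[OF assms(1), of n "\<lambda>_ _. True"]
  by (intro Max_eqI) auto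

lemma diameter_perfectI:
  assumes "n > 0" and C: "C \<subseteq> Zn_space n m" and dC: "min_dist n C = D + 1"
    and A: "is_anticode n m D A" and eq: "card C * card A = n ^ m"
  shows "diameter_perfect n m D C A"
proof -
  have "finite C" using C finite_Zn_space by (rule finite_subset)
  have sep: "D < lee_dist n u v" if "u \<in> C" "v \<in> C" "u \<noteq> v" for u v
    using min_dist_le[OF \<open>finite C\<close> that, of n] dC by simp
  have "card B \<le> card A" if "is_anticode n m D B" for B
  proof -
    have B: "B \<subseteq> Zn_space n m" "diam n B = D"
      using that by (auto simp: is_anticode_def)
    then have "finite B" using finite_Zn_space finite_subset by blast
    then have "card C * card B \<le> card C * card A"
      using code_anticode_bound[OF \<open>n > 0\<close> C B(1) sep] lee_dist_le_diam B(2) eq by force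
    moreover have "card C > 0"
      using eq \<open>n > 0\<close> by (metis mult_is_0 neq0_conv zero_less_power)
    ultimately show ?thesis by simp
  qed
  then show ?thesis
    unfolding diameter_perfect_def using C dC A eq by (simp add: card_Zn_space)
qed

lemma anticode_A_subset: "anticode_A n m t p1 p2 \<subseteq> Zn_space n m"
  by (auto simp: anticode_A_def)

lemma anticode_A_dist_le:
  assumes p: "p1 \<in> Zn_space n m" "p2 \<in> Zn_space n m" "lee_dist n p1 p2 = 1"
    and yz: "y \<in> anticode_A n m t p1 p2" "z \<in> anticode_A n m t p1 p2"
  shows "lee_dist n y z \<le> 2 * t + 1"
proof -
  have len: "length y = m" "length z = m" "length p1 = m" "length p2 = m"
    using p yz by (auto simp: anticode_A_def Zn_space_length)
  have tri: "lee_dist n y z \<le> lee_dist n y p + lee_dist n p q + lee_dist n z q"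
    if "length p = m" "length q = m" for p q
    using lee_dist_triangle[of y p z n] lee_dist_triangle[of p q z n]
      lee_dist_commute[of q z n] len that
    by simp
  have "lee_dist n p2 p1 = 1" using p(3) len lee_dist_commute[of p1 p2 n] by simp
  then show ?thesis
    using yz tri[of p1 p1] tri[of p1 p2] tri[of p2 p1] tri[of p2 p2] p(3) len
    by (auto simp: anticode_A_def lee_dist_self)
qed

section \<open>The plane \<open>Z_n^2\<close> and the codes \<open>C_i\<close>\<close>

definition zn_point :: "nat \<Rightarrow> int \<Rightarrow> int \<Rightarrow> int list" where
  "zn_point n a b = [a mod int n, b mod int n]"

lemma zn_point_in_Zn_space: "n > 0 \<Longrightarrow> zn_point n a b \<in> Zn_space n 2"
  by (simp add: zn_point_def Zn_space_def)

lemma zn_point_eq_iff: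
  "zn_point n a b = zn_point n c d \<longleftrightarrow> a mod int n = c mod int n \<and> b mod int n = d mod int n"
  by (simp add: zn_point_def)

lemma Zn_space_2_eq_zn_point: "u \<in> Zn_space n 2 \<Longrightarrow> u = zn_point n (u ! 0) (u ! 1)"
  by (auto simp: Zn_space_def zn_point_def numeral_2_eq_2 length_Suc_conv)

lemma lee_dist_zn_point:
  "lee_dist n (zn_point n a b) (zn_point n c d) = lee_norm n (a - c) + lee_norm n (b - d)"
proof -
  have "lee_norm n (a mod int n - c mod int n) = lee_norm n (a - c)"
    "lee_norm n (b mod int n - d mod int n) = lee_norm n (b - d)"
    by (rule lee_norm_mod_cong, simp add: mod_diff_eq)+
  then show ?thesis by (simp add: zn_point_def lee_dist_def lee_wt_eq_sum_list)
qed

lemma gen_code_2: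
  "gen_code n 2 [[a, b], [c, d]] = {zn_point n (u * a + v * c) (u * b + v * d) | u v. True}"
proof (intro equalityI subsetI)
  fix w assume "w \<in> gen_code n 2 [[a, b], [c, d]]"
  then show "w \<in> {zn_point n (u * a + v * c) (u * b + v * d) | u v. True}"
    by (auto simp: gen_code_def zn_point_def numeral_2_eq_2 upt_rec)
next
  fix w assume "w \<in> {zn_point n (u * a + v * c) (u * b + v * d) | u v. True}"
  then obtain u v where "w = zn_point n (u * a + v * c) (u * b + v * d)" by blast
  then show "w \<in> gen_code n 2 [[a, b], [c, d]]"
    unfolding gen_code_def
    by (intro CollectI exI[of _ "\<lambda>j. if j = 0 then u else v"])
      (simp add: zn_point_def numeral_2_eq_2 upt_rec)
qed

lemma vadd_zn_point:
  "length x = 2 \<Longrightarrow> vadd n x (zn_point n a b) = zn_point n (x ! 0 + a) (x ! 1 + b)"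
  by (auto simp: vadd_def zn_point_def numeral_2_eq_2 length_Suc_conv mod_add_right_eq)

lemma translate_gen_code_2:
  assumes "length x = 2"
  shows "translate n x (gen_code n 2 [[a, b], [c, d]])
    = {zn_point n (x ! 0 + u * a + v * c) (x ! 1 + u * b + v * d) | u v. True}"
proof -
  have "vadd n x ` {zn_point n (u * a + v * c) (u * b + v * d) | u v. True}
      = {vadd n x (zn_point n (u * a + v * c) (u * b + v * d)) | u v. True}"
    by blast
  then show ?thesis
    by (simp add: translate_def gen_code_2 vadd_zn_point[OF assms] add.assoc)
qed

lemma lattice_vector_norm_ge:
  fixes s i u v e0 e1 :: int
  assumes "s > 0"
    and h0: "2 * s^2 dvd e0 - (u * s + v * i)"
    and h1: "2 * s^2 dvd e1 - (v * (2 * s - i) - u * s)"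
    and "e0 \<noteq> 0 \<or> e1 \<noteq> 0"
  shows "2 * s \<le> \<bar>e0\<bar> + \<bar>e1\<bar>"
proof -
  have s2: "2 * s dvd 2 * s^2" "s dvd 2 * s^2" by (simp_all add: power2_eq_square)
  have "(e0 + e1) - 2 * s * v = (e0 - (u * s + v * i)) + (e1 - (v * (2 * s - i) - u * s))"
    by (simp add: algebra_simps)
  then have sum: "2 * s^2 dvd (e0 + e1) - 2 * s * v"
    using dvd_add[OF h0 h1] by (simp only:)
  show ?thesis
  proof (cases "e0 + e1 = 0")
    case False
    have "2 * s dvd ((e0 + e1) - 2 * s * v) + 2 * s * v"
      using dvd_trans[OF s2(1) sum] by (rule dvd_add) simp
    then have "\<bar>2 * s\<bar> \<le> \<bar>e0 + e1\<bar>" using False by (intro dvd_imp_le_int) simp_all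
    then show ?thesis using \<open>s > 0\<close> by simp
  next
    case True
    then have "(2 * s) * s dvd (2 * s) * v"
      using sum by (simp add: power2_eq_square mult.assoc)
    then have "s dvd v" using dvd_mult_cancel_left[of "2 * s" s v] \<open>s > 0\<close> by simp
    then have "s dvd (e0 - (u * s + v * i)) + (u * s + v * i)"
      using dvd_trans[OF s2(2) h0] by (intro dvd_add) simp_all
    then have "s dvd e0" by simp
    moreover have "e0 \<noteq> 0" using True assms(4) by auto
    ultimately have "\<bar>s\<bar> \<le> \<bar>e0\<bar>" by (intro dvd_imp_le_int)
    moreover have "\<bar>e1\<bar> = \<bar>e0\<bar>" using True by (simp add: eq_neg_iff_add_eq_0[symmetric])
    ultimately show ?thesis using \<open>s > 0\<close> by simp
  qed
qed

lemma lattice_vector_eq_0: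
  fixes s i u v :: int
  assumes "s > 0"
    and h0: "2 * s^2 dvd u * s + v * i" and h1: "2 * s^2 dvd v * (2 * s - i) - u * s"
    and "\<bar>u\<bar> < 2 * s" "\<bar>v\<bar> < s"
  shows "u = 0 \<and> v = 0"
proof -
  have "(u * s + v * i) + (v * (2 * s - i) - u * s) = (2 * s) * v" by (simp add: algebra_simps)
  then have "(2 * s) * s dvd (2 * s) * v"
    using dvd_add[OF h0 h1] by (simp add: power2_eq_square mult.assoc)
  then have "s dvd v" using dvd_mult_cancel_left[of "2 * s" s v] \<open>s > 0\<close> by simp
  then have "v = 0" using \<open>\<bar>v\<bar> < s\<close> dvd_imp_le_int[of v s] by force
  then have "(2 * s) * s dvd u * s" using h0 by (simp add: power2_eq_square)
  then have "2 * s dvd u" using dvd_mult_cancel_right[of s "2 * s" u] \<open>s > 0\<close> by simp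
  then have "u = 0" using \<open>\<bar>u\<bar> < 2 * s\<close> dvd_imp_le_int[of u "2 * s"] by force
  with \<open>v = 0\<close> show ?thesis by simp
qed

definition lattice_coset :: "nat \<Rightarrow> nat \<Rightarrow> nat \<Rightarrow> int \<Rightarrow> int \<Rightarrow> int list set" where
  "lattice_coset n s i x0 x1 =
     {zn_point n (x0 + u * int s + v * int i) (x1 + v * (2 * int s - int i) - u * int s)
       | u v. True}"

(* The first row of G_i is (s, -s) plus the second row. *)
lemma translate_code_eq_lattice_coset:
  assumes "length x = 2"
  shows "translate n x (gen_code n 2 [[int (s + i), int s - int i], [int i, int (2 * s) - int i]])
    = lattice_coset n s i (x ! 0) (x ! 1)"
proof -
  define f where
    "f u v = zn_point n (x ! 0 + u * int s + v * int i) (x ! 1 + v * (2 * int s - int i) - u * int s)"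
    for u v
  have "zn_point n (x ! 0 + u * int (s + i) + v * int i)
      (x ! 1 + u * (int s - int i) + v * (int (2 * s) - int i)) = f u (u + v)" for u v
    unfolding f_def by (simp add: algebra_simps)
  then have "translate n x (gen_code n 2 [[int (s + i), int s - int i], [int i, int (2 * s) - int i]])
      = {f u (u + v) | u v. True}"
    unfolding translate_gen_code_2[OF assms] by presburger
  also have "\<dots> = {f u v | u v. True}"
    by (auto, metis add.commute diff_add_cancel)
  finally show ?thesis
    unfolding lattice_coset_def f_def .
qed

lemma lattice_coset_subset: "n > 0 \<Longrightarrow> lattice_coset n s i x0 x1 \<subseteq> Zn_space n 2"
  by (auto simp: lattice_coset_def zn_point_in_Zn_space)

lemma finite_lattice_coset: "n > 0 \<Longrightarrow> finite (lattice_coset n s i x0 x1)"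
  using lattice_coset_subset finite_Zn_space by (rule finite_subset)

lemma lattice_coset_dist_ge:
  assumes n: "n = 2 * s^2" and "s > 0"
    and w: "w \<in> lattice_coset n s i x0 x1" "w' \<in> lattice_coset n s i x0 x1" "w \<noteq> w'"
  shows "2 * s \<le> lee_dist n w w'"
proof -
  obtain u v u' v' where
    w_eq: "w = zn_point n (x0 + u * int s + v * int i) (x1 + v * (2 * int s - int i) - u * int s)"
    and w'_eq:
      "w' = zn_point n (x0 + u' * int s + v' * int i) (x1 + v' * (2 * int s - int i) - u' * int s)"
    using w by (auto simp: lattice_coset_def)
  define d0 where "d0 = (u - u') * int s + (v - v') * int i"
  define d1 where "d1 = (v - v') * (2 * int s - int i) - (u - u') * int s"
  have "lee_dist n w w' = lee_norm n d0 + lee_norm n d1"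
    unfolding w_eq w'_eq lee_dist_zn_point d0_def d1_def by (simp add: algebra_simps)
  moreover have "n > 0" using n \<open>s > 0\<close> by simp
  then obtain e0 e1 where
    e0: "e0 mod int n = d0 mod int n" "\<bar>e0\<bar> = int (lee_norm n d0)" and
    e1: "e1 mod int n = d1 mod int n" "\<bar>e1\<bar> = int (lee_norm n d1)"
    using lee_norm_attained by metis
  moreover have nz: "e0 \<noteq> 0 \<or> e1 \<noteq> 0"
  proof (rule ccontr)
    assume "\<not> (e0 \<noteq> 0 \<or> e1 \<noteq> 0)"
    then have "int n dvd d0" "int n dvd d1"
      using e0(1) e1(1) by (simp_all add: mod_eq_0_iff_dvd)
    then show False
      using \<open>w \<noteq> w'\<close> unfolding w_eq w'_eq zn_point_eq_iff mod_eq_dvd_iff d0_def d1_def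
      by (auto simp: algebra_simps)
  qed
  moreover have "2 * (int s)^2 dvd e0 - ((u - u') * int s + (v - v') * int i)"
    "2 * (int s)^2 dvd e1 - ((v - v') * (2 * int s - int i) - (u - u') * int s)"
    using e0(1) e1(1) n unfolding mod_eq_dvd_iff d0_def d1_def by simp_all
  then have "2 * int s \<le> \<bar>e0\<bar> + \<bar>e1\<bar>"
    using lattice_vector_norm_ge nz \<open>s > 0\<close> by simp
  ultimately show ?thesis by simp
qed

lemma card_lattice_coset_ge:
  assumes n: "n = 2 * s^2" and "s > 0"
  shows "2 * s^2 \<le> card (lattice_coset n s i x0 x1)"
proof -
  define f where "f = (\<lambda>(u, v).
    zn_point n (x0 + u * int s + v * int i) (x1 + v * (2 * int s - int i) - u * int s))"
  define box where "box = {0..<2 * int s} \<times> {0..<int s}"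
  have "inj_on f box"
  proof (rule inj_onI, clarify)
    fix u v u' v'
    assume "(u, v) \<in> box" "(u', v') \<in> box" and eq: "f (u, v) = f (u', v')"
    then have bounds: "\<bar>u - u'\<bar> < 2 * int s" "\<bar>v - v'\<bar> < int s"
      by (auto simp: box_def)
    have "int n dvd (x0 + u * int s + v * int i) - (x0 + u' * int s + v' * int i)"
      "int n dvd (x1 + v * (2 * int s - int i) - u * int s)
        - (x1 + v' * (2 * int s - int i) - u' * int s)"
      using eq[unfolded f_def] by (simp_all add: zn_point_eq_iff mod_eq_dvd_iff)
    then have "2 * (int s)^2 dvd (u - u') * int s + (v - v') * int i"
      "2 * (int s)^2 dvd (v - v') * (2 * int s - int i) - (u - u') * int s"
      using n by (simp_all add: algebra_simps)
    then have "u - u' = 0 \<and> v - v' = 0"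
      using bounds \<open>s > 0\<close> by (intro lattice_vector_eq_0[of "int s" _ _ "int i"]) simp_all
    then show "u = u' \<and> v = v'" by simp
  qed
  moreover have "f ` box \<subseteq> lattice_coset n s i x0 x1"
    by (auto simp: f_def lattice_coset_def)
  moreover have "finite (lattice_coset n s i x0 x1)"
    using n \<open>s > 0\<close> by (simp add: finite_lattice_coset)
  ultimately have "card box \<le> card (lattice_coset n s i x0 x1)"
    by (rule card_inj_on_le)
  moreover have "card box = 2 * s^2"
    by (simp add: box_def card_cartesian_product power2_eq_square nat_mult_distrib)
  ultimately show ?thesis by simp
qed

lemma min_dist_lattice_coset:
  assumes n: "n = 2 * s^2" and "2 \<le> s" "i \<le> s"
  shows "min_dist n (lattice_coset n s i x0 x1) = 2 * s"
proof -
  have "n > 0" using n \<open>2 \<le> s\<close> by simp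
  let ?w = "zn_point n (x0 + 0 * int s + 1 * int i) (x1 + 1 * (2 * int s - int i) - 0 * int s)"
  let ?w' = "zn_point n (x0 + 0 * int s + 0 * int i) (x1 + 0 * (2 * int s - int i) - 0 * int s)"
  have pts: "?w \<in> lattice_coset n s i x0 x1" "?w' \<in> lattice_coset n s i x0 x1"
    unfolding lattice_coset_def by blast+
  have "2 * int s \<le> int s * int s" using \<open>2 \<le> s\<close> by (intro mult_right_mono) auto
  moreover have "int n = 2 * (int s * int s)" using n by (simp add: power2_eq_square)
  ultimately have "2 * (\<bar>int i\<bar> + \<bar>2 * int s - int i\<bar>) \<le> int n"
    using \<open>i \<le> s\<close> by simp
  then have "int (lee_norm n (int i) + lee_norm n (2 * int s - int i)) = int i + (2 * int s - int i)"
    using \<open>i \<le> s\<close> by (subst lee_norm_add_eq_abs) simp_all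
  then have "lee_dist n ?w ?w' = 2 * s"
    by (simp add: lee_dist_zn_point)
  moreover from this have "?w \<noteq> ?w'" using lee_dist_self[of n ?w] \<open>2 \<le> s\<close> by auto
  ultimately show ?thesis
    using lattice_coset_dist_ge n \<open>2 \<le> s\<close>
    by (intro min_dist_eqI[OF finite_lattice_coset[OF \<open>n > 0\<close>] _ pts]) auto
qed

section \<open>The anticode \<open>A_{2t+1}\<close> in \<open>Z_n^2\<close>\<close>

lemma unit_rotation_abs:
  fixes e0 e1 a b :: int
  assumes "\<bar>e0\<bar> + \<bar>e1\<bar> = 1"
  shows "\<bar>a * e0 - b * e1\<bar> + \<bar>a * e1 + b * e0\<bar> = \<bar>a\<bar> + \<bar>b\<bar>"
  using assms
  by (cases "e0 = 0"; cases "e0 = 1"; cases "e0 = -1") (auto simp: abs_if split: if_splits)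

lemma unit_rotation_dvd:
  fixes e0 e1 a b N :: int
  assumes "\<bar>e0\<bar> + \<bar>e1\<bar> = 1" "N dvd a * e0 - b * e1" "N dvd a * e1 + b * e0"
  shows "N dvd a \<and> N dvd b"
  using assms
  by (cases "e0 = 0"; cases "e0 = 1"; cases "e0 = -1") (auto simp: abs_if split: if_splits)

definition frame_point :: "nat \<Rightarrow> int \<Rightarrow> int \<Rightarrow> int \<Rightarrow> int \<Rightarrow> int \<Rightarrow> int \<Rightarrow> int list" where
  "frame_point n P0 P1 e0 e1 a b = zn_point n (P0 + a * e0 - b * e1) (P1 + a * e1 + b * e0)"

lemma lee_dist_frame_point:
  "lee_dist n (frame_point n P0 P1 e0 e1 a b) (frame_point n P0 P1 e0 e1 c d)
    = lee_norm n ((a - c) * e0 - (b - d) * e1) + lee_norm n ((a - c) * e1 + (b - d) * e0)"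
proof -
  have "P0 + a * e0 - b * e1 - (P0 + c * e0 - d * e1) = (a - c) * e0 - (b - d) * e1"
    "P1 + a * e1 + b * e0 - (P1 + c * e1 + d * e0) = (a - c) * e1 + (b - d) * e0"
    by (simp_all add: algebra_simps)
  then show ?thesis by (simp only: frame_point_def lee_dist_zn_point)
qed

lemma lee_dist_frame_point_le:
  assumes "\<bar>e0\<bar> + \<bar>e1\<bar> = 1"
  shows "int (lee_dist n (frame_point n P0 P1 e0 e1 a b) (frame_point n P0 P1 e0 e1 c d))
    \<le> \<bar>a - c\<bar> + \<bar>b - d\<bar>"
  using lee_norm_le_abs[of n "(a - c) * e0 - (b - d) * e1"]
    lee_norm_le_abs[of n "(a - c) * e1 + (b - d) * e0"] unit_rotation_abs[OF assms, of "a - c" "b - d"]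
  by (simp add: lee_dist_frame_point)

lemma lee_dist_frame_point_eq:
  assumes "\<bar>e0\<bar> + \<bar>e1\<bar> = 1" "2 * (\<bar>a - c\<bar> + \<bar>b - d\<bar>) \<le> int n"
  shows "int (lee_dist n (frame_point n P0 P1 e0 e1 a b) (frame_point n P0 P1 e0 e1 c d))
    = \<bar>a - c\<bar> + \<bar>b - d\<bar>"
proof -
  have rot: "\<bar>(a - c) * e0 - (b - d) * e1\<bar> + \<bar>(a - c) * e1 + (b - d) * e0\<bar> = \<bar>a - c\<bar> + \<bar>b - d\<bar>"
    by (rule unit_rotation_abs[OF assms(1)])
  then have "int (lee_norm n ((a - c) * e0 - (b - d) * e1) + lee_norm n ((a - c) * e1 + (b - d) * e0))
      = \<bar>a - c\<bar> + \<bar>b - d\<bar>"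
    using assms(2) by (subst lee_norm_add_eq_abs) simp_all
  then show ?thesis by (simp only: lee_dist_frame_point)
qed

lemma frame_point_inj:
  assumes "\<bar>e0\<bar> + \<bar>e1\<bar> = 1" "frame_point n P0 P1 e0 e1 a b = frame_point n P0 P1 e0 e1 c d"
    and "\<bar>a - c\<bar> < int n" "\<bar>b - d\<bar> < int n"
  shows "a = c \<and> b = d"
proof -
  have "int n dvd (a - c) * e0 - (b - d) * e1" "int n dvd (a - c) * e1 + (b - d) * e0"
    using assms(2) by (simp_all add: frame_point_def zn_point_eq_iff mod_eq_dvd_iff algebra_simps)
  then have "int n dvd a - c" "int n dvd b - d"
    using unit_rotation_dvd[OF assms(1)] by blast+
  then show ?thesis
    using assms(3,4) dvd_imp_le_int[of "a - c" "int n"] dvd_imp_le_int[of "b - d" "int n"] by force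
qed

lemma adjacent_points_frame:
  assumes "n > 0" "p1 \<in> Zn_space n 2" "p2 \<in> Zn_space n 2" "lee_dist n p1 p2 = 1"
  obtains P0 P1 e0 e1 where "\<bar>e0\<bar> + \<bar>e1\<bar> = 1"
    "p1 = frame_point n P0 P1 e0 e1 0 0" "p2 = frame_point n P0 P1 e0 e1 1 0"
proof -
  obtain P0 P1 Q0 Q1 where p: "p1 = zn_point n P0 P1" "p2 = zn_point n Q0 Q1"
    using Zn_space_2_eq_zn_point assms(2,3) by blast
  obtain e0 where e0: "e0 mod int n = (Q0 - P0) mod int n" "\<bar>e0\<bar> = int (lee_norm n (Q0 - P0))"
    using lee_norm_attained[OF assms(1)] by blast
  obtain e1 where e1: "e1 mod int n = (Q1 - P1) mod int n" "\<bar>e1\<bar> = int (lee_norm n (Q1 - P1))"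
    using lee_norm_attained[OF assms(1)] by blast
  have "lee_dist n p2 p1 = 1"
    using assms(2-4) lee_dist_commute Zn_space_length by metis
  then have "\<bar>e0\<bar> + \<bar>e1\<bar> = 1"
    using e0(2) e1(2) by (simp add: p lee_dist_zn_point)
  moreover have "(P0 + e0) mod int n = (P0 + (Q0 - P0)) mod int n"
    "(P1 + e1) mod int n = (P1 + (Q1 - P1)) mod int n"
    by (rule mod_add_cong[OF refl e0(1)], rule mod_add_cong[OF refl e1(1)])
  then have "p2 = zn_point n (P0 + e0) (P1 + e1)"
    by (simp add: p zn_point_eq_iff)
  ultimately show ?thesis
    using p by (intro that[of e0 e1 P0 P1]) (simp_all add: frame_point_def)
qed

definition planar_anticode :: "nat \<Rightarrow> (int \<times> int) set" where
  "planar_anticode t = {(a, b). \<bar>a\<bar> + \<bar>b\<bar> \<le> int t \<or> \<bar>a - 1\<bar> + \<bar>b\<bar> \<le> int t}"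

lemma planar_anticode_subset:
  "planar_anticode t \<subseteq> {- int t..int t + 1} \<times> {- int t..int t}"
  by (auto simp: planar_anticode_def)

lemma card_planar_anticode_ge: "2 * (t + 1)^2 \<le> card (planar_anticode t)"
proof -
  (* For r = 0 the image is {(a, b). |a| + |b| <= t, a + b = t (mod 2)}; r = 1 shifts it by (1, 0). *)
  define g where "g = (\<lambda>(q, m, r). (q + m + r - int t, q - m))"
  define T where "T = {0..int t} \<times> {0..int t} \<times> {0..1::int}"
  have "inj_on g T"
    unfolding inj_on_def g_def T_def by clarsimp presburger
  moreover have "g ` T \<subseteq> planar_anticode t"
    by (auto simp: g_def T_def planar_anticode_def)
  moreover have "finite (planar_anticode t)"
    using planar_anticode_subset by (rule finite_subset) simp
  ultimately have "card T \<le> card (planar_anticode t)"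
    by (rule card_inj_on_le)
  moreover have "card T = 2 * (t + 1)^2"
    by (simp add: T_def card_cartesian_product power2_eq_square nat_add_distrib)
  ultimately show ?thesis by simp
qed

lemma frame_point_in_anticode_A:
  assumes "n > 0" "\<bar>e0\<bar> + \<bar>e1\<bar> = 1" "(a, b) \<in> planar_anticode t"
  shows "frame_point n P0 P1 e0 e1 a b
    \<in> anticode_A n 2 t (frame_point n P0 P1 e0 e1 0 0) (frame_point n P0 P1 e0 e1 1 0)"
  using assms lee_dist_frame_point_le[OF assms(2), of n P0 P1 a b 0 0]
    lee_dist_frame_point_le[OF assms(2), of n P0 P1 a b 1 0]
  by (auto simp: anticode_A_def planar_anticode_def frame_point_def zn_point_in_Zn_space)

lemma card_anticode_A_ge:
  assumes "2 * t + 2 \<le> n" "p1 \<in> Zn_space n 2" "p2 \<in> Zn_space n 2" "lee_dist n p1 p2 = 1"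
  shows "2 * (t + 1)^2 \<le> card (anticode_A n 2 t p1 p2)"
proof -
  have "n > 0" using assms(1) by simp
  obtain P0 P1 e0 e1 where e: "\<bar>e0\<bar> + \<bar>e1\<bar> = 1"
    and p: "p1 = frame_point n P0 P1 e0 e1 0 0" "p2 = frame_point n P0 P1 e0 e1 1 0"
    by (rule adjacent_points_frame[OF \<open>n > 0\<close> assms(2-4)])
  define f where "f = (\<lambda>(a, b). frame_point n P0 P1 e0 e1 a b)"
  have "inj_on f (planar_anticode t)"
  proof (rule inj_onI, clarify)
    fix a b c d
    assume ab: "(a, b) \<in> planar_anticode t" and cd: "(c, d) \<in> planar_anticode t"
      and eq: "f (a, b) = f (c, d)"
    have "a \<in> {- int t..int t + 1}" "b \<in> {- int t..int t}"
      "c \<in> {- int t..int t + 1}" "d \<in> {- int t..int t}"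
      using subsetD[OF planar_anticode_subset ab] subsetD[OF planar_anticode_subset cd]
      by simp_all
    then have bounds: "\<bar>a - c\<bar> < int n" "\<bar>b - d\<bar> < int n"
      using assms(1) by (auto simp: abs_less_iff)
    have "frame_point n P0 P1 e0 e1 a b = frame_point n P0 P1 e0 e1 c d"
      using eq by (simp add: f_def)
    then show "a = c \<and> b = d"
      using frame_point_inj[OF e _ bounds] by blast
  qed
  moreover have "f ` planar_anticode t \<subseteq> anticode_A n 2 t p1 p2"
    using frame_point_in_anticode_A[OF \<open>n > 0\<close> e] p by (auto simp: f_def)
  moreover have "finite (anticode_A n 2 t p1 p2)"
    using anticode_A_subset finite_Zn_space by (rule finite_subset)
  ultimately have "card (planar_anticode t) \<le> card (anticode_A n 2 t p1 p2)"
    by (rule card_inj_on_le)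
  then show ?thesis using card_planar_anticode_ge[of t] by simp
qed

lemma anticode_A_is_anticode:
  assumes "4 * t + 2 \<le> n" "p1 \<in> Zn_space n 2" "p2 \<in> Zn_space n 2" "lee_dist n p1 p2 = 1"
  shows "is_anticode n 2 (2 * t + 1) (anticode_A n 2 t p1 p2)"
proof -
  have "n > 0" using assms(1) by simp
  obtain P0 P1 e0 e1 where e: "\<bar>e0\<bar> + \<bar>e1\<bar> = 1"
    and p: "p1 = frame_point n P0 P1 e0 e1 0 0" "p2 = frame_point n P0 P1 e0 e1 1 0"
    by (rule adjacent_points_frame[OF \<open>n > 0\<close> assms(2-4)])
  let ?y = "frame_point n P0 P1 e0 e1 (int t + 1) 0"
  let ?z = "frame_point n P0 P1 e0 e1 (- int t) 0"
  have yz: "?y \<in> anticode_A n 2 t p1 p2" "?z \<in> anticode_A n 2 t p1 p2"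
    unfolding p
    by (intro frame_point_in_anticode_A[OF \<open>n > 0\<close> e]; simp add: planar_anticode_def)+
  have "int (lee_dist n ?y ?z) = 2 * int t + 1"
    using lee_dist_frame_point_eq[OF e] assms(1) by simp
  then have dist: "lee_dist n ?y ?z = 2 * t + 1" by simp
  have "diam n (anticode_A n 2 t p1 p2) = 2 * t + 1"
    using anticode_A_dist_le[OF assms(2-4)]
    by (intro diam_eqI[OF finite_subset[OF anticode_A_subset finite_Zn_space] _ yz dist])
  then show ?thesis
    unfolding is_anticode_def using anticode_A_subset yz by blast
qed

theorem mainTheorem1:
  fixes t i n :: nat and x p1 p2 :: "int list"
  assumes "t \<ge> 1" and "n = 2 * (t + 1)^2" and "i \<le> t"
    and "x \<in> Zn_space n 2"
    and "p1 \<in> Zn_space n 2" and "p2 \<in> Zn_space n 2" and "lee_dist n p1 p2 = 1"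
  shows "diameter_perfect n 2 (2 * t + 1)
           (translate n x (gen_code n 2
              [[int (t + 1 + i), int (t + 1) - int i], [int i, int (2 * (t + 1)) - int i]]))
           (anticode_A n 2 t p1 p2)
       \<and> min_dist n (translate n x (gen_code n 2
              [[int (t + 1 + i), int (t + 1) - int i], [int i, int (2 * (t + 1)) - int i]]))
           = 2 * t + 2"
proof -
  define C where "C = translate n x (gen_code n 2
    [[int (t + 1 + i), int (t + 1) - int i], [int i, int (2 * (t + 1)) - int i]])"
  define A where "A = anticode_A n 2 t p1 p2"
  have "n > 0" "4 * t + 2 \<le> n"
    using assms(2) by (simp_all add: power2_eq_square algebra_simps)
  have C_eq: "C = lattice_coset n (t + 1) i (x ! 0) (x ! 1)"
    unfolding C_def by (rule translate_code_eq_lattice_coset[OF Zn_space_length[OF assms(4)]])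
  have dist_C: "min_dist n C = 2 * t + 2"
    unfolding C_eq using min_dist_lattice_coset assms by simp
  have sep: "2 * t + 1 < lee_dist n u v" if "u \<in> C" "v \<in> C" "u \<noteq> v" for u v
    using lattice_coset_dist_ge[OF assms(2) _ that[unfolded C_eq]] by simp
  have diam: "lee_dist n u v \<le> 2 * t + 1" if "u \<in> A" "v \<in> A" for u v
    using anticode_A_dist_le[OF assms(5-7) that[unfolded A_def]] .
  have "card C * card A \<le> n ^ 2"
    using lattice_coset_subset[OF \<open>n > 0\<close>] anticode_A_subset
    by (intro code_anticode_bound[OF \<open>n > 0\<close> _ _ sep diam]) (simp_all add: C_eq A_def)
  moreover have "n \<le> card C" "n \<le> card A"
    using card_lattice_coset_ge[OF assms(2)] card_anticode_A_ge[OF _ assms(5-7)]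
      \<open>4 * t + 2 \<le> n\<close> assms(2)
    by (simp_all add: C_eq A_def)
  then have "n * n \<le> card C * card A" by (rule mult_le_mono)
  ultimately have "card C * card A = n ^ 2"
    by (simp add: power2_eq_square)
  then have "diameter_perfect n 2 (2 * t + 1) C A"
    using diameter_perfectI[OF \<open>n > 0\<close>] lattice_coset_subset[OF \<open>n > 0\<close>] dist_C
      anticode_A_is_anticode[OF \<open>4 * t + 2 \<le> n\<close> assms(5-7)]
    by (simp add: C_eq A_def)
  with dist_C show ?thesis unfolding C_def A_def by simp
qed

end
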